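(* Let $D\ge1$, let $Q_D$ be the $D$-dimensional hypercube on $X=\{0,1\}^D$ with adjacency matrix $A$. The matrices $$\alpha^*_iA\alpha^*_j-\alpha^*_jA\alpha^*_i,\qquad 1\le i<j\le D,$$ form a basis for the space of antisymmetric $A$-like matrices of $Q_D$. In particular this space has dimension $\binom{D}{2}$.
   Context: $Q_D$ is the graph with vertex set $X=\{0,1\}^D$ (sequences $x=(x_1,\ldots,x_D)$, $x_i\in\{0,1\}$), two vertices adjacent iff they differ in exactly one coordinate. Matrices are real with rows and columns indexed by $X$. A matrix $B$ is $A$-like if $BA=AB$ and $B_{xy}=0$ for all $x,y\in X$ that are neither equal nor adjacent; $B$ is antisymmetric if $B^t=-B$. For $1\le i\le D$, $\alpha^*_i$ is the diagonal matrix with $(x,x)$-entry $1$ if $x_i=0$ and $-1$ if $x_i=1$. *)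

theory Defs
  imports "HOL-Analysis.Analysis"
begin

text \<open>Vertices of Q_D: boolean lists of length D; coordinate i (1-based) of x is x!(i-1),
  True standing for 1 and False for 0.\<close>
definition verts :: "nat \<Rightarrow> bool list set" where
  "verts D = {xs. length xs = D}"

definition adj :: "nat \<Rightarrow> bool list \<Rightarrow> bool list \<Rightarrow> bool" where
  "adj D x y \<longleftrightarrow> x \<in> verts D \<and> y \<in> verts D \<and> card {i. i < D \<and> x ! i \<noteq> y ! i} = 1"

text \<open>Matrices indexed by X are real functions on pairs of lists; a genuine X-indexed matrix
  vanishes outside X x X.\<close>
type_synonym mat = "bool list \<Rightarrow> bool list \<Rightarrow> real"

definition is_mat :: "nat \<Rightarrow> mat \<Rightarrow> bool" where
  "is_mat D B \<longleftrightarrow> (\<forall>x y. x \<notin> verts D \<or> y \<notin> verts D \<longrightarrow> B x y = 0)"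

definition mmul :: "nat \<Rightarrow> mat \<Rightarrow> mat \<Rightarrow> mat" where
  "mmul D B C = (\<lambda>x y. \<Sum>z\<in>verts D. B x z * C z y)"

definition adjmat :: "nat \<Rightarrow> mat" where
  "adjmat D = (\<lambda>x y. if adj D x y then 1 else 0)"

definition alpha_star :: "nat \<Rightarrow> nat \<Rightarrow> mat" where
  "alpha_star D i = (\<lambda>x y. if x \<in> verts D \<and> x = y then (if x ! (i - 1) then -1 else 1) else 0)"

definition A_like :: "nat \<Rightarrow> mat \<Rightarrow> bool" where
  "A_like D B \<longleftrightarrow> is_mat D B \<and> mmul D B (adjmat D) = mmul D (adjmat D) B \<and>
     (\<forall>x\<in>verts D. \<forall>y\<in>verts D. x \<noteq> y \<and> \<not> adj D x y \<longrightarrow> B x y = 0)"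

definition antisym_mat :: "mat \<Rightarrow> bool" where
  "antisym_mat B \<longleftrightarrow> (\<forall>x y. B y x = - B x y)"

definition gen :: "nat \<Rightarrow> nat \<Rightarrow> nat \<Rightarrow> mat" where
  "gen D i j = (\<lambda>x y. mmul D (alpha_star D i) (mmul D (adjmat D) (alpha_star D j)) x y
                     - mmul D (alpha_star D j) (mmul D (adjmat D) (alpha_star D i)) x y)"

definition pairs :: "nat \<Rightarrow> (nat \<times> nat) set" where
  "pairs D = {(i, j). 1 \<le> i \<and> i < j \<and> j \<le> D}"

end

theory Submission
  imports Defs
begin

text \<open>
  An antisymmetric matrix supported on the edges of \<open>Q\<^sub>D\<close> is determined by its edge values
  \<open>b\<^sub>k(x) = B(x, x + e\<^sub>k)\<close>. Writing the entries of \<open>BA\<close> and \<open>AB\<close> as sums over two-step walks shows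
  that \<open>B\<close> commutes with \<open>A\<close> exactly when \<open>\<Sum>\<^sub>k b\<^sub>k(x) = 0\<close> at every vertex and
  \<open>b\<^sub>k(x) + b\<^sub>l(x) = b\<^sub>k(x + e\<^sub>l) + b\<^sub>l(x + e\<^sub>k)\<close> around every square. The combination
  \<open>\<Sum> c\<^sub>i\<^sub>j (\<alpha>*\<^sub>i A \<alpha>*\<^sub>j - \<alpha>*\<^sub>j A \<alpha>*\<^sub>i)\<close> is the bilinear form of the skew matrix \<open>C\<close> of its
  coefficients restricted to the edges; its edge values \<open>2 s\<^sub>k(x) \<Sum>\<^sub>l C\<^sub>k\<^sub>l s\<^sub>l(x)\<close> satisfy both
  relations. Conversely, by the square relations (induction on the number of ones of \<open>x\<close>) a
  solution vanishing on the edges at the origin and at its neighbours vanishes everywhere, and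
  exactly one skew \<open>C\<close> matches these values: this gives spanning and linear independence.
\<close>

definition flip :: "nat \<Rightarrow> bool list \<Rightarrow> bool list" where
  "flip i x = x[i := \<not> x ! i]"

text \<open>Coordinates are 0-based: \<open>alpha_star D (Suc i)\<close> is the diagonal matrix of \<open>sign_at i\<close>.\<close>

definition sign_at :: "nat \<Rightarrow> bool list \<Rightarrow> real" where
  "sign_at i x = (if x ! i then -1 else 1)"

lemma length_flip [simp]: "length (flip i x) = length x"
  by (simp add: flip_def)

lemma nth_flip: "i < length x \<Longrightarrow> flip i x ! j = (if j = i then \<not> x ! i else x ! j)"
  by (auto simp: flip_def nth_list_update)

lemma flip_beyond: "\<not> i < length x \<Longrightarrow> flip i x = x"
  unfolding flip_def by (rule list_update_beyond) simp

lemma flip_flip [simp]: "flip i (flip i x) = x"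
  using flip_beyond[of i x] flip_beyond[of i "flip i x"]
  by (cases "i < length x") (auto simp: flip_def)

lemma flip_commute: "flip i (flip j x) = flip j (flip i x)"
  by (cases "i < length x"; cases "j < length x")
    (auto intro!: nth_equalityI simp: nth_flip flip_beyond)

lemma flip_in_verts_iff [simp]: "flip i x \<in> verts D \<longleftrightarrow> x \<in> verts D"
  by (simp add: verts_def)

lemma flip_eq_flip_iff: "i < length x \<Longrightarrow> j < length x \<Longrightarrow> flip i x = flip j x \<longleftrightarrow> i = j"
  by (metis nth_flip)

lemma flip_flip_nth:
  assumes "m < length x" "n < length x"
  shows "flip n (flip m x) ! i = (if (i = m) = (i = n) then x ! i else \<not> x ! i)"
  using assms by (auto simp: nth_flip)

lemma sign_at_flip: "i < length x \<Longrightarrow> sign_at j (flip i x) = (if j = i then - sign_at j x else sign_at j x)"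
  by (auto simp: sign_at_def nth_flip)

lemma sign_at_replicate_False: "j < D \<Longrightarrow> sign_at j (replicate D False) = 1"
  by (simp add: sign_at_def nth_replicate)

lemma finite_verts [simp]: "finite (verts D)"
  using finite_lists_length_eq[of "UNIV :: bool set" D] by (simp add: verts_def)

lemma adj_iff_flip:
  assumes "x \<in> verts D"
  shows "adj D x y \<longleftrightarrow> (\<exists>i<D. y = flip i x)"
proof
  assume "adj D x y"
  then have y: "y \<in> verts D" and "card {i. i < D \<and> x ! i \<noteq> y ! i} = 1"
    by (auto simp: adj_def)
  then obtain i where i: "{i. i < D \<and> x ! i \<noteq> y ! i} = {i}"
    by (meson card_1_singletonE)
  then have "i < D"
    by auto
  moreover have "y = flip i x"
  proof (rule nth_equalityI)
    show "length y = length (flip i x)"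
      using y assms by (simp add: verts_def)
    fix j
    assume "j < length y"
    then have "j < D"
      using y by (simp add: verts_def)
    then show "y ! j = flip i x ! j"
      using i \<open>i < D\<close> assms by (auto simp: nth_flip verts_def)
  qed
  ultimately show "\<exists>i<D. y = flip i x"
    by blast
next
  assume "\<exists>i<D. y = flip i x"
  then obtain i where i: "i < D" "y = flip i x"
    by blast
  then have "{j. j < D \<and> x ! j \<noteq> y ! j} = {i}"
    using assms by (auto simp: nth_flip verts_def)
  then show "adj D x y"
    using assms i by (simp add: adj_def)
qed

lemma adj_commute: "adj D x y = adj D y x"
proof -
  have "{i. i < D \<and> x ! i \<noteq> y ! i} = {i. i < D \<and> y ! i \<noteq> x ! i}"
    by auto
  then show ?thesis
    by (auto simp: adj_def)
qed

lemma adj_in_verts: "adj D x y \<Longrightarrow> x \<in> verts D \<and> y \<in> verts D"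
  by (simp add: adj_def)

lemma antisym_matD: "antisym_mat B \<Longrightarrow> B y x = - B x y"
  unfolding antisym_mat_def by blast

lemma antisym_mat_diff:
  assumes "antisym_mat B" "antisym_mat C"
  shows "antisym_mat (\<lambda>x y. B x y - C x y)"
  unfolding antisym_mat_def
  using antisym_matD[OF assms(1)] antisym_matD[OF assms(2)] by (metis minus_diff_minus)

lemma mmul_diff_left:
  "mmul D (\<lambda>x y. B x y - C x y) M = (\<lambda>x y. mmul D B M x y - mmul D C M x y)"
  by (simp add: mmul_def left_diff_distrib sum_subtractf)

lemma mmul_diff_right:
  "mmul D M (\<lambda>x y. B x y - C x y) = (\<lambda>x y. mmul D M B x y - mmul D M C x y)"
  by (simp add: mmul_def right_diff_distrib sum_subtractf)

lemma A_like_diff: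
  assumes "A_like D B" "A_like D C"
  shows "A_like D (\<lambda>x y. B x y - C x y)"
  using assms unfolding A_like_def is_mat_def by (simp add: mmul_diff_left mmul_diff_right)

lemma mmul_adjmat_right:
  assumes "y \<in> verts D"
  shows "mmul D B (adjmat D) x y = (\<Sum>k<D. B x (flip k y))"
proof -
  have "mmul D B (adjmat D) x y = (\<Sum>z\<in>verts D. if adj D z y then B x z else 0)"
    unfolding mmul_def adjmat_def by (intro sum.cong) auto
  also have "\<dots> = (\<Sum>z\<in>{z\<in>verts D. adj D z y}. B x z)"
    by (simp add: sum.inter_filter)
  also have "{z\<in>verts D. adj D z y} = (\<lambda>k. flip k y) ` {..<D}"
    using adj_iff_flip[OF assms] adj_commute assms by auto
  also have "(\<Sum>z\<in>(\<lambda>k. flip k y) ` {..<D}. B x z) = (\<Sum>k<D. B x (flip k y))"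
    using assms by (subst sum.reindex) (auto simp: inj_on_def flip_eq_flip_iff verts_def)
  finally show ?thesis .
qed

lemma mmul_adjmat_left:
  assumes "x \<in> verts D"
  shows "mmul D (adjmat D) B x y = (\<Sum>k<D. B (flip k x) y)"
proof -
  have "mmul D (adjmat D) B x y = (\<Sum>z\<in>verts D. if adj D x z then B z y else 0)"
    unfolding mmul_def adjmat_def by (intro sum.cong) auto
  also have "\<dots> = (\<Sum>z\<in>{z\<in>verts D. adj D x z}. B z y)"
    by (simp add: sum.inter_filter)
  also have "{z\<in>verts D. adj D x z} = (\<lambda>k. flip k x) ` {..<D}"
    using adj_iff_flip[OF assms] assms by auto
  also have "(\<Sum>z\<in>(\<lambda>k. flip k x) ` {..<D}. B z y) = (\<Sum>k<D. B (flip k x) y)"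
    using assms by (subst sum.reindex) (auto simp: inj_on_def flip_eq_flip_iff verts_def)
  finally show ?thesis .
qed

lemma mmul_adjmat_outside:
  assumes "is_mat D B" "x \<notin> verts D \<or> y \<notin> verts D"
  shows "mmul D B (adjmat D) x y = 0" "mmul D (adjmat D) B x y = 0"
  using assms
  by (auto simp: mmul_def adjmat_def is_mat_def dest: adj_in_verts intro!: sum.neutral)

lemma mmul_alpha_star_right:
  "mmul D M (alpha_star D j) x y = (if y \<in> verts D then M x y * sign_at (j - 1) y else 0)"
proof -
  have "mmul D M (alpha_star D j) x y
      = (\<Sum>z\<in>verts D. if z = y then M x y * sign_at (j - 1) y else 0)"
    unfolding mmul_def by (rule sum.cong) (auto simp: alpha_star_def sign_at_def)
  then show ?thesis
    by (simp add: sum.delta)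
qed

lemma mmul_alpha_star_left:
  "mmul D (alpha_star D i) M x y = (if x \<in> verts D then sign_at (i - 1) x * M x y else 0)"
proof -
  have "mmul D (alpha_star D i) M x y
      = (\<Sum>z\<in>verts D. if z = x then sign_at (i - 1) x * M x y else 0)"
    unfolding mmul_def by (rule sum.cong) (auto simp: alpha_star_def sign_at_def)
  then show ?thesis
    by (simp add: sum.delta)
qed

lemma gen_eq:
  "gen D i j x y = (if adj D x y
     then sign_at (i - 1) x * sign_at (j - 1) y - sign_at (j - 1) x * sign_at (i - 1) y else 0)"
  by (auto simp: gen_def mmul_alpha_star_left mmul_alpha_star_right adjmat_def dest: adj_in_verts)

section \<open>Antisymmetric A-like matrices through their edge values\<close>

definition edge_antisym :: "nat \<Rightarrow> mat \<Rightarrow> bool" where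
  "edge_antisym D B \<longleftrightarrow> is_mat D B \<and> antisym_mat B \<and>
     (\<forall>x\<in>verts D. \<forall>y\<in>verts D. x \<noteq> y \<and> \<not> adj D x y \<longrightarrow> B x y = 0)"

lemma A_like_antisym_imp_edge_antisym: "A_like D B \<Longrightarrow> antisym_mat B \<Longrightarrow> edge_antisym D B"
  by (simp add: A_like_def edge_antisym_def)

lemma edge_antisym_expand:
  assumes B: "edge_antisym D B" and x: "x \<in> verts D" and y: "y \<in> verts D"
  shows "B x y = (\<Sum>n<D. if y = flip n x then B x (flip n x) else 0)"
proof (cases "\<exists>n<D. y = flip n x")
  case True
  then obtain n where n: "n < D" "y = flip n x"
    by blast
  have "(\<Sum>n'<D. if y = flip n' x then B x (flip n' x) else 0)
      = (\<Sum>n'<D. if n' = n then B x y else 0)"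
    using n x by (intro sum.cong) (auto simp: flip_eq_flip_iff verts_def)
  then show ?thesis
    using n by simp
next
  case False
  have "B x y = 0"
  proof (cases "x = y")
    case True
    then show ?thesis
      using antisym_matD[of B x x] B by (simp add: edge_antisym_def)
  next
    case False
    then show ?thesis
      using \<open>\<not> (\<exists>n<D. y = flip n x)\<close> adj_iff_flip[OF x] B x y by (auto simp: edge_antisym_def)
  qed
  with False show ?thesis
    by (simp add: sum.neutral)
qed

definition two_step_walks :: "nat \<Rightarrow> bool list \<Rightarrow> bool list \<Rightarrow> (nat \<times> nat) set" where
  "two_step_walks D x y = {(m, n). m < D \<and> n < D \<and> flip n (flip m x) = y}"

lemma finite_two_step_walks [simp]: "finite (two_step_walks D x y)"
  by (rule finite_subset[of _ "{..<D} \<times> {..<D}"]) (auto simp: two_step_walks_def)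

lemma swap_in_two_step_walks: "prod.swap p \<in> two_step_walks D x y \<longleftrightarrow> p \<in> two_step_walks D x y"
  by (cases p) (auto simp: two_step_walks_def flip_commute)

lemma sum_two_step_walks:
  "(\<Sum>m<D. \<Sum>n<D. if flip n (flip m x) = y then f m n else 0) = (\<Sum>(m, n)\<in>two_step_walks D x y. f m n)"
proof -
  have "two_step_walks D x y = {p \<in> {..<D} \<times> {..<D}. flip (snd p) (flip (fst p) x) = y}"
    by (auto simp: two_step_walks_def)
  then show ?thesis
    by (simp add: sum.inter_filter sum.cartesian_product case_prod_beta)
qed

lemma two_step_walks_square:
  assumes x: "x \<in> verts D" and kl: "k < D" "l < D" "k \<noteq> l"
  shows "two_step_walks D x (flip k (flip l x)) = {(l, k), (k, l)}"
proof (intro equalityI subsetI)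
  fix p
  assume "p \<in> two_step_walks D x (flip k (flip l x))"
  then obtain m n where p: "p = (m, n)" "m < D" "n < D"
    and eq: "flip n (flip m x) = flip k (flip l x)"
    by (auto simp: two_step_walks_def)
  have len: "length x = D"
    using x by (simp add: verts_def)
  have "((i = m) = (i = n)) = ((i = l) = (i = k))" if "i < D" for i
    using arg_cong[OF eq, of "\<lambda>z. z ! i"] p kl len by (auto simp: flip_flip_nth split: if_splits)
  from this[of k] this[of l] this[of m] show "p \<in> {(l, k), (k, l)}"
    using p kl by auto
qed (use kl in \<open>auto simp: two_step_walks_def flip_commute\<close>)

lemma mmul_adjmat_right_walks:
  assumes B: "edge_antisym D B" and x: "x \<in> verts D" and y: "y \<in> verts D"
  shows "mmul D B (adjmat D) x y = (\<Sum>(m, n)\<in>two_step_walks D x y. B x (flip m x))"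
proof -
  have "mmul D B (adjmat D) x y
      = (\<Sum>n<D. \<Sum>m<D. if flip n y = flip m x then B x (flip m x) else 0)"
    unfolding mmul_adjmat_right[OF y] using edge_antisym_expand[OF B x] y by simp
  also have "\<dots> = (\<Sum>m<D. \<Sum>n<D. if flip n (flip m x) = y then B x (flip m x) else 0)"
    by (subst sum.swap) (intro sum.cong refl; metis flip_flip)
  finally show ?thesis
    by (simp add: sum_two_step_walks)
qed

lemma mmul_adjmat_left_walks:
  assumes B: "edge_antisym D B" and x: "x \<in> verts D" and y: "y \<in> verts D"
  shows "mmul D (adjmat D) B x y = (\<Sum>(m, n)\<in>two_step_walks D x y. B (flip m x) y)"
proof -
  have "mmul D (adjmat D) B x y
      = (\<Sum>m<D. \<Sum>n<D. if flip n (flip m x) = y then B (flip m x) y else 0)"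
    unfolding mmul_adjmat_left[OF x] using edge_antisym_expand[OF B _ y] x
    by (intro sum.cong refl) (auto intro: sum.cong)
  then show ?thesis
    by (simp add: sum_two_step_walks)
qed

lemma A_like_edge_sum:
  assumes "A_like D B" "antisym_mat B" "x \<in> verts D"
  shows "(\<Sum>k<D. B x (flip k x)) = 0"
proof -
  have "(\<Sum>k<D. B x (flip k x)) = mmul D B (adjmat D) x x"
    using mmul_adjmat_right[OF assms(3)] by simp
  also have "\<dots> = mmul D (adjmat D) B x x"
    using assms(1) by (simp add: A_like_def)
  also have "\<dots> = (\<Sum>k<D. - B x (flip k x))"
    unfolding mmul_adjmat_left[OF assms(3)] by (intro sum.cong refl) (rule antisym_matD[OF assms(2)])
  also have "\<dots> = - (\<Sum>k<D. B x (flip k x))"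
    by (simp add: sum_negf)
  finally show ?thesis
    by simp
qed

lemma A_like_edge_square:
  assumes A: "A_like D B" and as: "antisym_mat B" and x: "x \<in> verts D"
    and kl: "k < D" "l < D" "k \<noteq> l"
  shows "B x (flip k x) + B x (flip l x)
       = B (flip l x) (flip k (flip l x)) + B (flip k x) (flip l (flip k x))"
proof -
  have B: "edge_antisym D B"
    using A as by (rule A_like_antisym_imp_edge_antisym)
  define y where "y = flip k (flip l x)"
  have y: "y \<in> verts D" and y': "y = flip l (flip k x)"
    using x by (simp_all add: y_def flip_commute)
  have "B x (flip l x) + B x (flip k x) = mmul D B (adjmat D) x y"
    using mmul_adjmat_right_walks[OF B x y] two_step_walks_square[OF x kl] kl by (simp add: y_def)
  also have "\<dots> = mmul D (adjmat D) B x y"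
    using A by (simp add: A_like_def)
  also have "\<dots> = B (flip l x) y + B (flip k x) y"
    using mmul_adjmat_left_walks[OF B x y] two_step_walks_square[OF x kl] kl by (simp add: y_def)
  finally show ?thesis
    using y' by (simp add: y_def add.commute)
qed

lemma A_like_edge_via_neighbours:
  assumes A: "A_like D B" and as: "antisym_mat B" and x: "x \<in> verts D" and k: "k < D"
  shows "2 * B x (flip k x)
       = (\<Sum>l<D. if l = k then 0 else B x (flip k x) - B (flip l x) (flip k (flip l x)))"
proof -
  define b where "b k u = B u (flip k u)" for k u
  have at_flip_k: "b l (flip k x) = b l x - (if l = k then 2 * b k x else 0)
      + (if l = k then 0 else b k x - b k (flip l x))" if "l < D" for l
  proof (cases "l = k")
    case True
    then show ?thesis
      using antisym_matD[OF as, of x "flip k x"] by (simp add: b_def)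
  next
    case False
    then show ?thesis
      using A_like_edge_square[OF A as x k that] by (simp add: b_def)
  qed
  have "0 = (\<Sum>l<D. b l (flip k x))"
    using A_like_edge_sum[OF A as, of "flip k x"] x by (simp add: b_def)
  also have "\<dots> = (\<Sum>l<D. b l x) - 2 * b k x
      + (\<Sum>l<D. if l = k then 0 else b k x - b k (flip l x))"
    using k at_flip_k by (simp add: sum.distrib sum_subtractf)
  also have "(\<Sum>l<D. b l x) = 0"
    using A_like_edge_sum[OF A as x] by (simp add: b_def)
  finally show ?thesis
    by (simp add: b_def cong: if_cong)
qed

lemma sum_two_step_walks_swap:
  "(\<Sum>p\<in>two_step_walks D x y. f (prod.swap p)) = (\<Sum>p\<in>two_step_walks D x y. f p)"
  by (rule sum.reindex_bij_witness[of _ prod.swap prod.swap]) (auto simp: swap_in_two_step_walks)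

lemma edge_antisym_commute_off_diagonal:
  assumes B: "edge_antisym D B"
    and square: "\<And>x k l. x \<in> verts D \<Longrightarrow> k < D \<Longrightarrow> l < D \<Longrightarrow> k \<noteq> l \<Longrightarrow>
       B x (flip k x) + B x (flip l x)
     = B (flip l x) (flip k (flip l x)) + B (flip k x) (flip l (flip k x))"
    and x: "x \<in> verts D" and y: "y \<in> verts D" and "x \<noteq> y"
  shows "mmul D B (adjmat D) x y = mmul D (adjmat D) B x y"
proof -
  define W where "W = two_step_walks D x y"
  define T :: "nat \<times> nat \<Rightarrow> real" where "T = (\<lambda>(m, n). B x (flip m x) - B (flip m x) y)"
  \<comment> \<open>The walks (m, n) and (n, m) bound a square, whose relation cancels their terms.\<close>
  have "T p + T (prod.swap p) = 0" if p: "p \<in> W" for p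
  proof -
    obtain m n where mn: "p = (m, n)" "m < D" "n < D" "y = flip n (flip m x)"
      using p by (auto simp: W_def two_step_walks_def)
    then have "m \<noteq> n"
      using \<open>x \<noteq> y\<close> by auto
    then show ?thesis
      using square[OF x mn(3,2)] mn by (simp add: T_def flip_commute)
  qed
  then have "(\<Sum>p\<in>W. T p) + (\<Sum>p\<in>W. T (prod.swap p)) = 0"
    by (simp add: sum.distrib[symmetric])
  then have "(\<Sum>p\<in>W. T p) = 0"
    unfolding W_def sum_two_step_walks_swap by simp
  moreover have "mmul D B (adjmat D) x y - mmul D (adjmat D) B x y = (\<Sum>p\<in>W. T p)"
    unfolding mmul_adjmat_right_walks[OF B x y] mmul_adjmat_left_walks[OF B x y] W_def T_def
    by (simp add: case_prod_beta sum_subtractf)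
  ultimately show ?thesis
    by simp
qed

lemma A_like_if_edge_relations:
  assumes B: "edge_antisym D B"
    and sum_0: "\<And>x. x \<in> verts D \<Longrightarrow> (\<Sum>k<D. B x (flip k x)) = 0"
    and square: "\<And>x k l. x \<in> verts D \<Longrightarrow> k < D \<Longrightarrow> l < D \<Longrightarrow> k \<noteq> l \<Longrightarrow>
       B x (flip k x) + B x (flip l x)
     = B (flip l x) (flip k (flip l x)) + B (flip k x) (flip l (flip k x))"
  shows "A_like D B"
proof -
  have as: "antisym_mat B" and mat: "is_mat D B"
    using B by (simp_all add: edge_antisym_def)
  have "mmul D B (adjmat D) x y = mmul D (adjmat D) B x y" for x y
  proof (cases "x \<in> verts D \<and> y \<in> verts D")
    case False
    then show ?thesis
      using mmul_adjmat_outside[OF mat] by metis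
  next
    case True
    then have x: "x \<in> verts D" and y: "y \<in> verts D"
      by auto
    show ?thesis
    proof (cases "y = x")
      case True
      have "mmul D (adjmat D) B x x = (\<Sum>k<D. - B x (flip k x))"
        unfolding mmul_adjmat_left[OF x] by (intro sum.cong refl) (rule antisym_matD[OF as])
      then show ?thesis
        using True mmul_adjmat_right[OF x] sum_0[OF x] by (simp add: sum_negf)
    next
      case False
      then show ?thesis
        using edge_antisym_commute_off_diagonal[OF B square x y] by simp
    qed
  qed
  then show ?thesis
    using B by (auto simp: A_like_def edge_antisym_def)
qed

section \<open>Edge functions determined near the origin\<close>

lemma cube_square_relation_three:
  fixes g :: "nat \<Rightarrow> bool list \<Rightarrow> real"
  assumes square: "\<And>k l x. x \<in> verts D \<Longrightarrow> k < D \<Longrightarrow> l < D \<Longrightarrow> k \<noteq> l \<Longrightarrow>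
      g k x + g l x = g k (flip l x) + g l (flip k x)"
    and x: "x \<in> verts D" and klm: "k < D" "l < D" "m < D" "k \<noteq> l" "k \<noteq> m" "l \<noteq> m"
  shows "g k x - g k (flip l x) - g k (flip m x) + g k (flip l (flip m x)) = 0"
proof -
  \<comment> \<open>\<open>Q\<close> is antisymmetric in its first two and symmetric in its last two arguments.\<close>
  define Q where "Q = (\<lambda>k l m. g k x - g k (flip l x) - g k (flip m x) + g k (flip l (flip m x)))"
  have Q_swap12: "Q k l m = - Q l k m"
    if "k < D" "l < D" "m < D" "k \<noteq> l" for k l m
    using square[OF x, of k l] square[of "flip m x" k l] x that by (simp add: Q_def)
  have Q_swap23: "Q k l m = Q k m l" for k l m
    by (simp add: Q_def flip_commute[of l m])
  have "Q k l m = - Q m k l"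
    using Q_swap23 Q_swap12[of k m l] klm by simp
  also have "\<dots> = Q l m k"
    using Q_swap23[of m k l] Q_swap12[of m l k] klm by simp
  also have "\<dots> = - Q k l m"
    using Q_swap23[of l m k] Q_swap12[of l k m] klm by simp
  finally show ?thesis
    by (simp add: Q_def)
qed

definition ones :: "bool list \<Rightarrow> nat set" where
  "ones x = {i. i < length x \<and> x ! i}"

lemma finite_ones: "finite (ones x)"
  by (simp add: ones_def)

lemma card_ones_flip_less: "i \<in> ones x \<Longrightarrow> card (ones (flip i x)) < card (ones x)"
proof -
  assume i: "i \<in> ones x"
  then have "ones (flip i x) = ones x - {i}"
    by (auto simp: ones_def nth_flip)
  then show ?thesis
    using card_Diff1_less[OF finite_ones i] by simp
qed

lemma ones_empty_imp:
  assumes "x \<in> verts D" "ones x = {}"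
  shows "x = replicate D False"
proof (rule nth_equalityI)
  show "length x = length (replicate D False)"
    using assms(1) by (simp add: verts_def)
  fix i
  assume "i < length x"
  then show "x ! i = replicate D False ! i"
    using assms unfolding ones_def verts_def by auto
qed

lemma ones_singleton_imp:
  assumes "x \<in> verts D" "ones x = {l}"
  shows "x = flip l (replicate D False)"
proof (rule nth_equalityI)
  have len: "length x = D"
    using assms(1) by (simp add: verts_def)
  then show "length x = length (flip l (replicate D False))"
    by simp
  have "l < D"
    using assms(2) len unfolding ones_def by auto
  fix i
  assume "i < length x"
  then show "x ! i = flip l (replicate D False) ! i"
    using assms(2) len \<open>l < D\<close> unfolding ones_def by (auto simp: nth_flip)
qed

lemma cube_fun_eq_0:
  fixes g :: "nat \<Rightarrow> bool list \<Rightarrow> real"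
  assumes flip_same: "\<And>k x. x \<in> verts D \<Longrightarrow> k < D \<Longrightarrow> g k (flip k x) = - g k x"
    and square: "\<And>k l x. x \<in> verts D \<Longrightarrow> k < D \<Longrightarrow> l < D \<Longrightarrow> k \<noteq> l \<Longrightarrow>
      g k x + g l x = g k (flip l x) + g l (flip k x)"
    and origin: "\<And>k. k < D \<Longrightarrow> g k (replicate D False) = 0"
    and near_origin: "\<And>k l. k < D \<Longrightarrow> l < D \<Longrightarrow> k \<noteq> l \<Longrightarrow> g k (flip l (replicate D False)) = 0"
    and x: "x \<in> verts D" and k: "k < D"
  shows "g k x = 0"
  using x
proof (induction "card (ones x)" arbitrary: x rule: less_induct)
  case less
  note x = \<open>x \<in> verts D\<close>
  have IH: "g k y = 0" if "y \<in> verts D" "card (ones y) < card (ones x)" for y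
    using less.hyps that by blast
  have below: "i < D" if "i \<in> ones x" for i
    using that x by (simp add: ones_def verts_def)
  consider "ones x = {}" | "k \<in> ones x" | l where "k \<notin> ones x" "ones x = {l}"
    | l m where "k \<notin> ones x" "l \<in> ones x" "m \<in> ones x" "l \<noteq> m"
    by blast
  then show ?case
  proof cases
    case 1
    then show ?thesis
      using origin[OF k] ones_empty_imp[OF x] by simp
  next
    case 2
    then show ?thesis
      using flip_same[of "flip k x" k] IH[of "flip k x"] card_ones_flip_less x k by simp
  next
    case 3
    then show ?thesis
      using near_origin[OF k below] ones_singleton_imp[OF x] by auto
  next
    case 4
    have "l < D" "m < D" "k \<noteq> l" "k \<noteq> m"
      using 4 below by auto
    moreover have "g k (flip l (flip m x)) = 0"
    proof (rule IH)
      have "l \<in> ones (flip m x)"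
        using 4 by (auto simp: ones_def nth_flip)
      then show "card (ones (flip l (flip m x))) < card (ones x)"
        using card_ones_flip_less[of l "flip m x"] card_ones_flip_less[OF 4(3)] by linarith
    qed (use x in simp)
    ultimately show ?thesis
      using cube_square_relation_three[OF square x k, of l m] 4
        IH[of "flip l x"] IH[of "flip m x"] card_ones_flip_less x by simp
  qed
qed

lemma A_like_antisym_eq_0:
  assumes A: "A_like D B" and as: "antisym_mat B"
    and origin: "\<And>k. k < D \<Longrightarrow> B (replicate D False) (flip k (replicate D False)) = 0"
    and near_origin: "\<And>k l. k < D \<Longrightarrow> l < D \<Longrightarrow> k \<noteq> l \<Longrightarrow>
      B (flip l (replicate D False)) (flip k (flip l (replicate D False))) = 0"
  shows "B = (\<lambda>x y. 0)"
proof (intro ext)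
  fix x y
  have B: "edge_antisym D B"
    using A as by (rule A_like_antisym_imp_edge_antisym)
  have edge_0: "B u (flip k u) = 0" if "u \<in> verts D" "k < D" for u k
  proof (rule cube_fun_eq_0[where g = "\<lambda>k u. B u (flip k u)"])
    show "B (flip k u) (flip k (flip k u)) = - B u (flip k u)" for k u
      unfolding flip_flip by (rule antisym_matD[OF as])
    show "B u (flip k u) + B u (flip l u) = B (flip l u) (flip k (flip l u)) + B (flip k u) (flip l (flip k u))"
      if "u \<in> verts D" "k < D" "l < D" "k \<noteq> l" for u k l
      by (rule A_like_edge_square[OF A as that])
  qed (use origin near_origin that in simp_all)
  show "B x y = 0"
  proof (cases "x \<in> verts D \<and> y \<in> verts D")
    case True
    then show ?thesis
      using edge_antisym_expand[OF B] edge_0 by (simp add: sum.neutral)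
  next
    case False
    then show ?thesis
      using B by (auto simp: edge_antisym_def is_mat_def)
  qed
qed

section \<open>Linear combinations of the generators\<close>

definition comb :: "nat \<Rightarrow> (nat \<times> nat \<Rightarrow> real) \<Rightarrow> mat" where
  "comb D c = (\<lambda>x y. \<Sum>p\<in>pairs D. c p * gen D (fst p) (snd p) x y)"

definition skew_coeffs :: "(nat \<times> nat \<Rightarrow> real) \<Rightarrow> nat \<Rightarrow> nat \<Rightarrow> real" where
  "skew_coeffs c k l =
     (if k < l then c (Suc k, Suc l) else if l < k then - c (Suc l, Suc k) else 0)"

text \<open>The value at the edge \<open>(x, flip k x)\<close> of the form \<open>(x, y) \<mapsto> \<Sum>\<^sub>k\<^sub>l C\<^sub>k\<^sub>l s\<^sub>k(x) s\<^sub>l(y)\<close>.\<close>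

definition form_edge :: "nat \<Rightarrow> (nat \<Rightarrow> nat \<Rightarrow> real) \<Rightarrow> nat \<Rightarrow> bool list \<Rightarrow> real" where
  "form_edge D C k x = 2 * sign_at k x * (\<Sum>l<D. C k l * sign_at l x)"

lemma finite_pairs: "finite (pairs D)"
  by (rule finite_subset[of _ "{1..D} \<times> {1..D}"]) (auto simp: pairs_def)

lemma sum_pairs:
  "(\<Sum>p\<in>pairs D. f p) = (\<Sum>i<D. \<Sum>j<D. if i < j then f (Suc i, Suc j) else (0::real))"
proof -
  have pairs_eq: "pairs D = (\<lambda>(i, j). (Suc i, Suc j)) ` {(i, j). i < j \<and> j < D}"
  proof (intro equalityI subsetI)
    fix p
    assume "p \<in> pairs D"
    then obtain a b where p: "p = (a, b)" "1 \<le> a" "a < b" "b \<le> D"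
      by (auto simp: pairs_def)
    show "p \<in> (\<lambda>(i, j). (Suc i, Suc j)) ` {(i, j). i < j \<and> j < D}"
      by (rule image_eqI[where x = "(a - 1, b - 1)"]) (use p in auto)
  qed (auto simp: pairs_def)
  have "inj_on (\<lambda>(i, j). (Suc i, Suc j)) {(i, j). i < j \<and> j < D}"
    by (auto simp: inj_on_def)
  then have "(\<Sum>p\<in>pairs D. f p) = (\<Sum>q\<in>{q \<in> {..<D} \<times> {..<D}. fst q < snd q}. f (Suc (fst q), Suc (snd q)))"
    unfolding pairs_eq by (subst sum.reindex) (auto intro!: sum.cong)
  also have "\<dots> = (\<Sum>i<D. \<Sum>j<D. if i < j then f (Suc i, Suc j) else 0)"
    by (simp add: sum.inter_filter sum.cartesian_product case_prod_beta)
  finally show ?thesis .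
qed

lemma comb_diff: "comb D (\<lambda>p. c p - d p) = (\<lambda>x y. comb D c x y - comb D d x y)"
  by (simp add: comb_def left_diff_distrib sum_subtractf)

lemma comb_single:
  assumes "p \<in> pairs D"
  shows "comb D (\<lambda>q. if q = p then 1 else 0) = gen D (fst p) (snd p)"
proof (intro ext)
  fix x y
  have "comb D (\<lambda>q. if q = p then 1 else 0) x y
      = (\<Sum>q\<in>pairs D. if q = p then gen D (fst q) (snd q) x y else 0)"
    unfolding comb_def by (intro sum.cong) auto
  then show "comb D (\<lambda>q. if q = p then 1 else 0) x y = gen D (fst p) (snd p) x y"
    using assms finite_pairs by simp
qed

lemma skew_coeffs_skew: "skew_coeffs c l k = - skew_coeffs c k l"
  by (simp add: skew_coeffs_def)

lemma sum_sign_at_flip: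
  assumes "l < length x" "l < D"
  shows "(\<Sum>j<D. a j * sign_at j (flip l x)) = (\<Sum>j<D. a j * sign_at j x) - 2 * a l * sign_at l x"
proof -
  have "(\<Sum>j<D. a j * sign_at j (flip l x))
      = (\<Sum>j<D. a j * sign_at j x - (if j = l then 2 * a j * sign_at j x else 0))"
    using assms(1) by (intro sum.cong refl) (auto simp: sign_at_flip)
  also have "\<dots> = (\<Sum>j<D. a j * sign_at j x) - 2 * a l * sign_at l x"
    using assms(2) by (simp add: sum_subtractf)
  finally show ?thesis .
qed

lemma form_edge_flip:
  assumes "x \<in> verts D" "l < D"
  shows "form_edge D C k (flip l x)
       = 2 * sign_at k (flip l x) * ((\<Sum>j<D. C k j * sign_at j x) - 2 * C k l * sign_at l x)"
  using assms sum_sign_at_flip[of l x D "C k"] by (simp add: form_edge_def verts_def)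

lemma form_edge_sum:
  assumes skew: "\<And>k l. C l k = - C k l"
  shows "(\<Sum>k<D. form_edge D C k x) = 0"
proof -
  define S where "S = (\<Sum>k<D. \<Sum>l<D. C k l * (sign_at k x * sign_at l x))"
  have "S = (\<Sum>l<D. \<Sum>k<D. C k l * (sign_at k x * sign_at l x))"
    unfolding S_def by (rule sum.swap)
  also have "\<dots> = (\<Sum>l<D. \<Sum>k<D. - (C l k * (sign_at l x * sign_at k x)))"
    by (intro sum.cong refl) (subst skew, simp add: mult_ac)
  also have "\<dots> = - S"
    unfolding S_def by (simp add: sum_negf)
  finally have "S = 0"
    by simp
  moreover have "(\<Sum>k<D. form_edge D C k x) = 2 * S"
    by (simp add: S_def form_edge_def sum_distrib_left algebra_simps)
  ultimately show ?thesis
    by simp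
qed

lemma form_edge_square:
  assumes skew: "\<And>k l. C l k = - C k l"
    and x: "x \<in> verts D" and kl: "k < D" "l < D" "k \<noteq> l"
  shows "form_edge D C k x + form_edge D C l x = form_edge D C k (flip l x) + form_edge D C l (flip k x)"
proof -
  have len: "k < length x" "l < length x"
    using x kl by (auto simp: verts_def)
  show ?thesis
    unfolding form_edge_flip[OF x kl(2)] form_edge_flip[OF x kl(1)]
    using len kl skew[of k l] by (simp add: form_edge_def sign_at_flip algebra_simps)
qed

lemma form_edge_replicate_False:
  "k < D \<Longrightarrow> form_edge D C k (replicate D False) = 2 * (\<Sum>l<D. C k l)"
  by (simp add: form_edge_def sign_at_replicate_False)

lemma form_edge_flip_replicate_False:
  assumes "k < D" "l < D" "k \<noteq> l"
  shows "form_edge D C k (flip l (replicate D False)) = 2 * (\<Sum>j<D. C k j) - 4 * C k l"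
  using assms by (simp add: form_edge_flip sign_at_flip sign_at_replicate_False verts_def)

lemma gen_flip:
  assumes "x \<in> verts D" "k < D"
  shows "gen D (Suc i) (Suc j) x (flip k x)
       = sign_at i x * sign_at j x * ((if i = k then 2 else 0) - (if j = k then 2 else 0))"
proof -
  have "adj D x (flip k x)" and "k < length x"
    using adj_iff_flip[OF assms(1)] assms by (auto simp: verts_def)
  then show ?thesis
    by (auto simp: gen_eq sign_at_flip algebra_simps)
qed

lemma comb_flip:
  assumes x: "x \<in> verts D" and k: "k < D"
  shows "comb D c x (flip k x) = form_edge D (skew_coeffs c) k x"
proof -
  define H where "H = (\<lambda>i j. if i < j then 2 * c (Suc i, Suc j) * sign_at i x * sign_at j x else 0)"
  have "comb D c x (flip k x)
      = (\<Sum>i<D. \<Sum>j<D. (if i = k then H i j else 0) - (if j = k then H i j else 0))"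
    unfolding comb_def sum_pairs fst_conv snd_conv
    by (intro sum.cong refl) (auto simp: gen_flip[OF x k] H_def)
  also have "\<dots> = (\<Sum>i<D. \<Sum>j<D. if i = k then H i j else 0) - (\<Sum>i<D. \<Sum>j<D. if j = k then H i j else 0)"
    by (simp add: sum_subtractf)
  also have "(\<Sum>i<D. \<Sum>j<D. if i = k then H i j else 0) = (\<Sum>j<D. H k j)"
  proof -
    have "(\<Sum>i<D. \<Sum>j<D. if i = k then H i j else 0) = (\<Sum>i<D. if i = k then \<Sum>j<D. H i j else 0)"
      by (intro sum.cong refl) simp
    then show ?thesis
      using k by simp
  qed
  also have "(\<Sum>i<D. \<Sum>j<D. if j = k then H i j else 0) = (\<Sum>i<D. H i k)"
    using k by (intro sum.cong refl) simp
  also have "(\<Sum>j<D. H k j) - (\<Sum>i<D. H i k) = (\<Sum>l<D. 2 * sign_at k x * (skew_coeffs c k l * sign_at l x))"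
    unfolding sum_subtractf[symmetric] by (intro sum.cong refl) (auto simp: H_def skew_coeffs_def)
  finally show ?thesis
    by (simp add: form_edge_def sum_distrib_left)
qed

lemma comb_edge_antisym: "edge_antisym D (comb D c)"
  unfolding edge_antisym_def
proof (intro conjI ballI impI)
  show "is_mat D (comb D c)"
    unfolding is_mat_def comb_def by (auto simp: gen_eq dest: adj_in_verts intro!: sum.neutral)
  have "comb D c y x = - comb D c x y" for x y
    unfolding comb_def sum_negf[symmetric] by (intro sum.cong refl) (simp add: gen_eq adj_commute algebra_simps)
  then show "antisym_mat (comb D c)"
    unfolding antisym_mat_def by blast
  fix x y
  assume "x \<noteq> y \<and> \<not> adj D x y"
  then show "comb D c x y = 0"
    unfolding comb_def by (auto simp: gen_eq intro!: sum.neutral)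
qed

lemma comb_A_like: "A_like D (comb D c)"
proof (rule A_like_if_edge_relations[OF comb_edge_antisym])
  fix x
  assume "x \<in> verts D"
  then show "(\<Sum>k<D. comb D c x (flip k x)) = 0"
    using form_edge_sum[OF skew_coeffs_skew] by (simp add: comb_flip)
next
  fix x k l
  assume "x \<in> verts D" "k < D" "l < D" "k \<noteq> l"
  then show "comb D c x (flip k x) + comb D c x (flip l x)
           = comb D c (flip l x) (flip k (flip l x)) + comb D c (flip k x) (flip l (flip k x))"
    using form_edge_square[OF skew_coeffs_skew] by (simp add: comb_flip)
qed

lemma comb_eq_0_imp_coeffs_eq_0:
  assumes "comb D c = (\<lambda>x y. 0)" "p \<in> pairs D"
  shows "c p = 0"
proof -
  obtain k l where p: "p = (Suc k, Suc l)" "k < l" "l < D"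
    using assms(2) unfolding pairs_def by (auto intro: that[of "fst p - 1" "snd p - 1"])
  define z where "z = replicate D False"
  have "form_edge D (skew_coeffs c) k z = 0" "form_edge D (skew_coeffs c) k (flip l z) = 0"
    using comb_flip[of _ D k c] assms(1) p by (auto simp: z_def verts_def)
  then have "skew_coeffs c k l = 0"
    using p by (simp add: z_def form_edge_replicate_False form_edge_flip_replicate_False)
  then show ?thesis
    using p by (simp add: skew_coeffs_def)
qed

lemma A_like_antisym_in_span:
  assumes A: "A_like D B" and as: "antisym_mat B"
  shows "\<exists>c. B = comb D c"
proof -
  define z where "z = replicate D False"
  have z: "z \<in> verts D"
    by (simp add: z_def verts_def)
  define b where "b k u = B u (flip k u)" for k u
  \<comment> \<open>Chosen so that comb D c has the edge values of B at the origin and its neighbours.\<close>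
  define C where "C k l = (if k = l then 0 else (b k z - b k (flip l z)) / 4)" for k l
  have C_skew: "C l k = - C k l" if "k < D" "l < D" for k l
    using A_like_edge_square[OF A as z that] by (cases "k = l") (auto simp: b_def C_def field_simps)
  have edge_origin: "b k z = 2 * (\<Sum>l<D. C k l)" if "k < D" for k
  proof -
    have "(\<Sum>l<D. C k l) = (\<Sum>l<D. if l = k then 0 else b k z - b k (flip l z)) / 4"
      unfolding C_def sum_divide_distrib by (intro sum.cong) auto
    then show ?thesis
      using A_like_edge_via_neighbours[OF A as z that] by (simp add: b_def cong: if_cong)
  qed
  define c where "c p = C (fst p - 1) (snd p - 1)" for p
  have coeffs: "skew_coeffs c k l = C k l" if "k < D" "l < D" for k l
  proof (cases k l rule: linorder_cases)
    case greater
    then show ?thesis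
      using C_skew[OF that] by (simp add: skew_coeffs_def c_def)
  qed (simp_all add: skew_coeffs_def c_def C_def)
  have row_sum: "(\<Sum>j<D. skew_coeffs c k j) = (\<Sum>j<D. C k j)" if "k < D" for k
    using coeffs[OF that] by simp
  have "(\<lambda>x y. B x y - comb D c x y) = (\<lambda>x y. 0)"
  proof (rule A_like_antisym_eq_0[of D, folded z_def])
    show "A_like D (\<lambda>x y. B x y - comb D c x y)"
      using A comb_A_like by (rule A_like_diff)
    show "antisym_mat (\<lambda>x y. B x y - comb D c x y)"
      using as comb_edge_antisym[of D c] by (simp add: antisym_mat_diff edge_antisym_def)
    show "B z (flip k z) - comb D c z (flip k z) = 0" if "k < D" for k
      using that z edge_origin[OF that] row_sum[OF that]
      by (simp add: comb_flip b_def z_def form_edge_replicate_False)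
    show "B (flip l z) (flip k (flip l z)) - comb D c (flip l z) (flip k (flip l z)) = 0"
      if "k < D" "l < D" "k \<noteq> l" for k l
      using that z edge_origin[OF that(1)] row_sum[OF that(1)] coeffs[OF that(1,2)]
      by (simp add: comb_flip b_def C_def z_def form_edge_flip_replicate_False)
  qed
  then show ?thesis
    by (auto simp: fun_eq_iff)
qed

lemma card_pairs: "card (pairs D) = D choose 2"
proof -
  have "inj_on (\<lambda>p. {fst p, snd p}) (pairs D)"
    by (rule inj_onI) (auto simp: pairs_def doubleton_eq_iff)
  moreover have "(\<lambda>p. {fst p, snd p}) ` pairs D = {S. S \<subseteq> {1..D} \<and> card S = 2}"
  proof (intro equalityI subsetI)
    fix S
    assume "S \<in> {S. S \<subseteq> {1..D} \<and> card S = 2}"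
    then obtain u v where S: "S = {u, v}" "u < v" "{u, v} \<subseteq> {1..D}"
      by (auto simp: card_2_iff) (metis insert_commute linorder_neqE_nat)
    then show "S \<in> (\<lambda>p. {fst p, snd p}) ` pairs D"
      by (intro image_eqI[where x = "(u, v)"]) (auto simp: pairs_def)
  qed (auto simp: pairs_def)
  ultimately show ?thesis
    using card_image n_subsets[of "{1..D}" 2] by fastforce
qed

lemma inj_on_gen_pairs: "inj_on (\<lambda>p. gen D (fst p) (snd p)) (pairs D)"
proof (rule inj_onI)
  fix p q
  assume p: "p \<in> pairs D" and q: "q \<in> pairs D"
    and eq: "gen D (fst p) (snd p) = gen D (fst q) (snd q)"
  define c where "c r = (if r = p then 1 else 0) - (if r = q then 1 else (0::real))" for r
  have "comb D c = (\<lambda>x y. 0)"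
    unfolding c_def comb_diff comb_single[OF p] comb_single[OF q] eq by simp
  then have "c p = 0"
    using comb_eq_0_imp_coeffs_eq_0 p by blast
  then show "p = q"
    by (auto simp: c_def split: if_splits)
qed

theorem theorem9p7:
  fixes D :: nat
  assumes "D \<ge> 1"
  shows "(\<forall>p\<in>pairs D. A_like D (gen D (fst p) (snd p)) \<and> antisym_mat (gen D (fst p) (snd p)))
    \<and> (\<forall>c :: nat \<times> nat \<Rightarrow> real.
          (\<lambda>x y. \<Sum>p\<in>pairs D. c p * gen D (fst p) (snd p) x y) = (\<lambda>x y. 0)
          \<longrightarrow> (\<forall>p\<in>pairs D. c p = 0))
    \<and> (\<forall>B. A_like D B \<and> antisym_mat B \<longrightarrow>
          (\<exists>c :: nat \<times> nat \<Rightarrow> real. B = (\<lambda>x y. \<Sum>p\<in>pairs D. c p * gen D (fst p) (snd p) x y)))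
    \<and> card ((\<lambda>p. gen D (fst p) (snd p)) ` pairs D) = D choose 2"
proof (intro conjI ballI allI impI)
  fix p
  assume "p \<in> pairs D"
  then show "A_like D (gen D (fst p) (snd p))" "antisym_mat (gen D (fst p) (snd p))"
    using comb_single comb_A_like comb_edge_antisym by (metis edge_antisym_def)+
next
  fix c :: "nat \<times> nat \<Rightarrow> real" and p
  assume "(\<lambda>x y. \<Sum>p\<in>pairs D. c p * gen D (fst p) (snd p) x y) = (\<lambda>x y. 0)" "p \<in> pairs D"
  then show "c p = 0"
    using comb_eq_0_imp_coeffs_eq_0 unfolding comb_def by blast
next
  fix B
  assume "A_like D B \<and> antisym_mat B"
  then show "\<exists>c. B = (\<lambda>x y. \<Sum>p\<in>pairs D. c p * gen D (fst p) (snd p) x y)"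
    using A_like_antisym_in_span unfolding comb_def by blast
next
  show "card ((\<lambda>p. gen D (fst p) (snd p)) ` pairs D) = D choose 2"
    using card_image[OF inj_on_gen_pairs] card_pairs by simp
qed

end
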